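(* Let $0<\alpha<\beta<\tfrac12$ and $\rho=\frac{\log\beta}{\log\alpha}$. There exist constants $K_1,K_2>0$ such that for all $y,\tilde y\in A_\alpha$ with $|y-\tilde y|$ sufficiently small, $$K_1|y-\tilde y|^\rho\ \ge\ |I_p|\ \ge\ K_2|y-\tilde y|^\rho,\qquad I_p:=\sum_{i=0}^\infty\beta^i\big(y_{-i-1}-\tilde y_{-i-1}\big).$$
   Context: $A_\alpha\subset[0,1]$ is the Cantor set with $A_\alpha=\alpha A_\alpha\cup(\alpha A_\alpha+1-\alpha)$. The skinny baker's map $B_\alpha(x,y)=(2x,\alpha y)$ if $0\le x<\tfrac12$ and $(2x-1,\alpha y+1-\alpha)$ if $\tfrac12\le x<1$ is invertible on $[0,1)\times A_\alpha$ with inverse $B_\alpha^{-1}(x,y)=(x/2,y/\alpha)$ if $y\le\tfrac12$ and $((x+1)/2,(y-(1-\alpha))/\alpha)$ if $y>\tfrac12$. For $n\in\mathbb N$, $y_{-n}$ denotes the second coordinate of $B_\alpha^{-n}(x,y)$ (it depends only on $y$); similarly $\tilde y_{-n}$. *)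

theory Defs
  imports "HOL-Analysis.Analysis"
begin

definition cantor_step :: "real \<Rightarrow> real set \<Rightarrow> real set" where
  "cantor_step \<alpha> S = ((\<lambda>y. \<alpha> * y) ` S) \<union> ((\<lambda>y. \<alpha> * y + 1 - \<alpha>) ` S)"

text \<open>The Cantor set A_alpha in [0,1]: the attractor of the IFS, i.e. the intersection of
  the iterates of the Hutchinson operator applied to [0,1]; it is the unique nonempty compact
  set with A = alpha A \<union> (alpha A + 1 - alpha).\<close>
definition cantor_set :: "real \<Rightarrow> real set" where
  "cantor_set \<alpha> = (\<Inter>n. (cantor_step \<alpha> ^^ n) {0..1})"

text \<open>Second coordinate of the inverse skinny baker's map (depends only on y).\<close>
definition baker_inv_y :: "real \<Rightarrow> real \<Rightarrow> real" where
  "baker_inv_y \<alpha> y = (if y \<le> 1/2 then y / \<alpha> else (y - (1 - \<alpha>)) / \<alpha>)"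

text \<open>y_{-n}: second coordinate of B_alpha^{-n}(x,y).\<close>
definition y_back :: "real \<Rightarrow> nat \<Rightarrow> real \<Rightarrow> real" where
  "y_back \<alpha> n y = (baker_inv_y \<alpha> ^^ n) y"

end

theory Submission
  imports Defs
begin

text \<open>As long as the backward orbits of \<open>y, y' \<in> A\<^sub>\<alpha>\<close> lie on the same side of \<open>1/2\<close>, each
  backward step multiplies \<open>y - y'\<close> by \<open>1/\<alpha>\<close>. If \<open>n\<close> is the first step where the sides differ,
  then \<open>y - y' = \<alpha>\<^sup>n t\<close> with \<open>1 - 2\<alpha> \<le> |t| \<le> 1\<close> (the gap in the middle of \<open>A\<^sub>\<alpha>\<close>), the first
  \<open>n\<close> terms of \<open>I\<^sub>p\<close> add up exactly to \<open>t (\<beta>\<^sup>n - \<alpha>\<^sup>n) / (\<beta> - \<alpha>)\<close>, and the tail is at most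
  \<open>\<beta>\<^sup>n / (1 - \<beta>)\<close>. Since \<open>\<beta> < 1/2\<close> the first part dominates once \<open>\<alpha>\<^sup>n \<ll> \<beta>\<^sup>n\<close>, i.e. for
  \<open>y\<close> close to \<open>y'\<close>, so \<open>|I\<^sub>p| \<asymp> \<beta>\<^sup>n = (\<alpha>\<^sup>n)\<^sup>\<rho> \<asymp> |y - y'|\<^sup>\<rho>\<close>.\<close>

lemma cantor_step_iterate_subset:
  assumes "0 \<le> \<alpha>" "\<alpha> \<le> 1"
  shows "(cantor_step \<alpha> ^^ n) {0..1} \<subseteq> {0..1}"
proof (induction n)
  case 0
  then show ?case by simp
next
  case (Suc n)
  have "\<alpha> * z \<in> {0..1}" "\<alpha> * z + 1 - \<alpha> \<in> {0..1}" if "z \<in> {0..1}" for z :: real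
  proof -
    have "0 \<le> \<alpha> * z" "\<alpha> * z \<le> \<alpha>"
      using that assms mult_left_le[of z \<alpha>] by auto
    with assms show "\<alpha> * z \<in> {0..1}" "\<alpha> * z + 1 - \<alpha> \<in> {0..1}" by auto
  qed
  with Suc show ?case by (auto simp: cantor_step_def)
qed

lemma cantor_set_subset_unit: "cantor_set \<alpha> \<subseteq> {0..1}"
proof
  fix y assume "y \<in> cantor_set \<alpha>"
  then have "y \<in> (cantor_step \<alpha> ^^ 0) {0..1}" unfolding cantor_set_def by blast
  then show "y \<in> {0..1}" by simp
qed

lemma cantor_set_gap:
  assumes "0 \<le> \<alpha>" "\<alpha> \<le> 1" "y \<in> cantor_set \<alpha>"
  shows "y \<le> \<alpha> \<or> 1 - \<alpha> \<le> y"
proof -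
  have "y \<in> (cantor_step \<alpha> ^^ Suc 0) {0..1}"
    using assms(3) unfolding cantor_set_def by blast
  then show ?thesis
    using assms(1,2) mult_left_le[of _ \<alpha>] by (auto simp: cantor_step_def)
qed

lemma baker_inv_y_eq:
  assumes "\<alpha> \<noteq> 0"
  shows "y = \<alpha> * baker_inv_y \<alpha> y + (if y \<le> 1/2 then 0 else 1 - \<alpha>)"
  using assms by (simp add: baker_inv_y_def)

lemma baker_inv_y_cantor_set:
  assumes "0 < \<alpha>" "\<alpha> < 1/2" and y: "y \<in> cantor_set \<alpha>"
  shows "baker_inv_y \<alpha> y \<in> cantor_set \<alpha>"
  unfolding cantor_set_def
proof
  fix n
  have "y \<in> (cantor_step \<alpha> ^^ Suc n) {0..1}"
    using y unfolding cantor_set_def by blast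
  then obtain z where z: "z \<in> (cantor_step \<alpha> ^^ n) {0..1}"
    and yz: "y = \<alpha> * z \<or> y = \<alpha> * z + 1 - \<alpha>"
    by (auto simp: cantor_step_def)
  have "0 \<le> \<alpha> * z" "\<alpha> * z \<le> \<alpha>"
    using z cantor_step_iterate_subset[of \<alpha> n] assms mult_left_le[of z \<alpha>] by auto
  with yz assms have "(y \<le> 1/2 \<and> y = \<alpha> * z) \<or> (\<not> y \<le> 1/2 \<and> y = \<alpha> * z + 1 - \<alpha>)"
    by linarith
  with assms have "baker_inv_y \<alpha> y = z"
    unfolding baker_inv_y_def by auto
  with z show "baker_inv_y \<alpha> y \<in> (cantor_step \<alpha> ^^ n) {0..1}" by simp
qed

lemma y_back_0 [simp]: "y_back \<alpha> 0 y = y"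
  by (simp add: y_back_def)

lemma y_back_Suc: "y_back \<alpha> (Suc k) y = baker_inv_y \<alpha> (y_back \<alpha> k y)"
  by (simp add: y_back_def)

lemma y_back_cantor_set:
  assumes "0 < \<alpha>" "\<alpha> < 1/2" "y \<in> cantor_set \<alpha>"
  shows "y_back \<alpha> k y \<in> cantor_set \<alpha>"
  by (induction k) (use assms baker_inv_y_cantor_set in \<open>auto simp: y_back_Suc\<close>)

lemma y_back_diff_Suc:
  assumes "\<alpha> \<noteq> 0" and same: "(y_back \<alpha> k y \<le> 1/2) = (y_back \<alpha> k y' \<le> 1/2)"
  shows "y_back \<alpha> k y - y_back \<alpha> k y' = \<alpha> * (y_back \<alpha> (Suc k) y - y_back \<alpha> (Suc k) y')"
  using baker_inv_y_eq[OF assms(1), of "y_back \<alpha> k y"]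
    baker_inv_y_eq[OF assms(1), of "y_back \<alpha> k y'"] same
  by (auto simp: y_back_Suc algebra_simps split: if_splits)

lemma y_back_diff_eq_pow_mult:
  assumes "\<alpha> \<noteq> 0" "m \<le> k"
    and same: "\<And>j. m \<le> j \<Longrightarrow> j < k \<Longrightarrow> (y_back \<alpha> j y \<le> 1/2) = (y_back \<alpha> j y' \<le> 1/2)"
  shows "y_back \<alpha> m y - y_back \<alpha> m y' = \<alpha>^(k - m) * (y_back \<alpha> k y - y_back \<alpha> k y')"
  using assms(2)
proof (induction k rule: dec_induct)
  case base
  then show ?case by simp
next
  case (step n)
  then have "y_back \<alpha> m y - y_back \<alpha> m y' = \<alpha>^(n - m) * (y_back \<alpha> n y - y_back \<alpha> n y')"
    by simp
  also have "\<dots> = \<alpha>^(n - m) * \<alpha> * (y_back \<alpha> (Suc n) y - y_back \<alpha> (Suc n) y')"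
    using y_back_diff_Suc[OF assms(1) same[of n]] step by simp
  also have "\<alpha>^(n - m) * \<alpha> = \<alpha>^(Suc n - m)"
    using step by (simp add: Suc_diff_le)
  finally show ?case .
qed

lemma y_back_diff_le_one:
  assumes "0 < \<alpha>" "\<alpha> < 1/2" "y \<in> cantor_set \<alpha>" "y' \<in> cantor_set \<alpha>"
  shows "\<bar>y_back \<alpha> k y - y_back \<alpha> k y'\<bar> \<le> 1"
proof -
  have "y_back \<alpha> k y \<in> {0..1}" "y_back \<alpha> k y' \<in> {0..1}"
    using y_back_cantor_set[OF assms(1,2,3), of k] y_back_cantor_set[OF assms(1,2,4), of k]
      cantor_set_subset_unit[of \<alpha>] by blast+
  then show ?thesis by auto
qed

lemma y_back_diff_ge_gap:
  assumes "0 < \<alpha>" "\<alpha> < 1/2" "y \<in> cantor_set \<alpha>" "y' \<in> cantor_set \<alpha>"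
    and differ: "(y_back \<alpha> k y \<le> 1/2) \<noteq> (y_back \<alpha> k y' \<le> 1/2)"
  shows "1 - 2 * \<alpha> \<le> \<bar>y_back \<alpha> k y - y_back \<alpha> k y'\<bar>"
  using cantor_set_gap[OF _ _ y_back_cantor_set[OF assms(1,2,3), of k]]
    cantor_set_gap[OF _ _ y_back_cantor_set[OF assms(1,2,4), of k]] assms(1,2) differ
  by (cases "y_back \<alpha> k y \<le> 1/2") auto

lemma y_back_sides_differ:
  assumes "0 < \<alpha>" "\<alpha> < 1/2" "y \<in> cantor_set \<alpha>" "y' \<in> cantor_set \<alpha>" "y \<noteq> y'"
  shows "\<exists>k. (y_back \<alpha> k y \<le> 1/2) \<noteq> (y_back \<alpha> k y' \<le> 1/2)"
proof (rule ccontr)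
  assume same: "\<not> ?thesis"
  obtain k where k: "\<alpha>^k < \<bar>y - y'\<bar>"
    using real_arch_pow_inv[of "\<bar>y - y'\<bar>" \<alpha>] assms by auto
  have "y - y' = \<alpha>^k * (y_back \<alpha> k y - y_back \<alpha> k y')"
    using y_back_diff_eq_pow_mult[of \<alpha> 0 k y y'] same assms(1) by auto
  then have "\<bar>y - y'\<bar> = \<alpha>^k * \<bar>y_back \<alpha> k y - y_back \<alpha> k y'\<bar>"
    using assms(1) by (simp add: abs_mult)
  also have "\<dots> \<le> \<alpha>^k"
    using y_back_diff_le_one[OF assms(1-4), of k] assms(1) by (simp add: mult_left_le)
  finally show False using k by simp
qed

lemma cantor_set_first_difference:
  assumes a: "0 < \<alpha>" "\<alpha> < 1/2" and y: "y \<in> cantor_set \<alpha>" and y': "y' \<in> cantor_set \<alpha>"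
    and "y \<noteq> y'"
  obtains n where "1 - 2 * \<alpha> \<le> \<bar>y_back \<alpha> n y - y_back \<alpha> n y'\<bar>"
    and "y - y' = \<alpha>^n * (y_back \<alpha> n y - y_back \<alpha> n y')"
    and "\<And>i. i < n \<Longrightarrow>
      y_back \<alpha> (Suc i) y - y_back \<alpha> (Suc i) y' = \<alpha>^(n - Suc i) * (y_back \<alpha> n y - y_back \<alpha> n y')"
proof -
  define differ where "differ k \<longleftrightarrow> (y_back \<alpha> k y \<le> 1/2) \<noteq> (y_back \<alpha> k y' \<le> 1/2)" for k
  define n where "n = (LEAST k. differ k)"
  have "differ n"
    unfolding n_def using y_back_sides_differ[OF assms] by (metis LeastI differ_def)
  have same: "(y_back \<alpha> j y \<le> 1/2) = (y_back \<alpha> j y' \<le> 1/2)" if "j < n" for j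
    using not_less_Least[OF that[unfolded n_def]] unfolding differ_def by blast
  show ?thesis
  proof
    show "1 - 2 * \<alpha> \<le> \<bar>y_back \<alpha> n y - y_back \<alpha> n y'\<bar>"
      using y_back_diff_ge_gap[OF a y y'] \<open>differ n\<close> unfolding differ_def by blast
    show "y - y' = \<alpha>^n * (y_back \<alpha> n y - y_back \<alpha> n y')"
      using y_back_diff_eq_pow_mult[of \<alpha> 0 n] same a by simp
    show "y_back \<alpha> (Suc i) y - y_back \<alpha> (Suc i) y' = \<alpha>^(n - Suc i) * (y_back \<alpha> n y - y_back \<alpha> n y')"
      if "i < n" for i
      using y_back_diff_eq_pow_mult[of \<alpha> "Suc i" n] same a that by simp
  qed
qed

lemma sum_power_mult_power_diff:
  fixes a b :: real
  shows "(\<Sum>i<n. b^i * a^(n - Suc i)) * (b - a) = b^n - a^n"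
proof (cases n)
  case (Suc m)
  then show ?thesis using diff_power_eq_sum[of b m a] by (simp add: mult.commute)
qed simp

text \<open>The series splits into a finite geometric part, where the first \<open>n\<close> terms are exact
  multiples of \<open>t\<close>, and a tail of size at most \<open>\<beta>^n / (1 - \<beta>)\<close>.\<close>
lemma geometric_weighted_series_bounds:
  fixes D :: "nat \<Rightarrow> real"
  assumes "0 < \<alpha>" "\<alpha> < \<beta>" "\<beta> < 1" "0 \<le> c"
    and D_le: "\<And>k. \<bar>D k\<bar> \<le> 1"
    and D_init: "\<And>i. i < n \<Longrightarrow> D (Suc i) = \<alpha>^(n - Suc i) * t"
    and t: "c \<le> \<bar>t\<bar>" "\<bar>t\<bar> \<le> 1"
  shows "\<bar>\<Sum>i. \<beta>^i * D (i + 1)\<bar> \<le> (1 / (\<beta> - \<alpha>) + 1 / (1 - \<beta>)) * \<beta>^n"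
    and "c * ((\<beta>^n - \<alpha>^n) / (\<beta> - \<alpha>)) - \<beta>^n / (1 - \<beta>) \<le> \<bar>\<Sum>i. \<beta>^i * D (i + 1)\<bar>"
proof -
  define f where "f i = \<beta>^i * D (i + 1)" for i
  have f_le: "norm (f i) \<le> \<beta>^i" for i
    using D_le[of "i + 1"] assms(1,2) unfolding f_def by (simp add: abs_mult mult_left_le)
  have "summable (\<lambda>i. \<beta>^i)" using assms(1-3) by simp
  then have "summable f"
    by (rule summable_comparison_test[rotated]) (use f_le in auto)
  define R where "R = (\<Sum>j. f (j + n))"
  have split: "(\<Sum>i. f i) = R + (\<Sum>i<n. f i)"
    unfolding R_def by (rule suminf_split_initial_segment[OF \<open>summable f\<close>])
  have "norm R \<le> (\<Sum>j. \<beta>^n * \<beta>^j)"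
    unfolding R_def
  proof (rule norm_suminf_le)
    show "norm (f (j + n)) \<le> \<beta>^n * \<beta>^j" for j
      using f_le[of "j + n"] by (simp add: power_add mult.commute)
    show "summable (\<lambda>j. \<beta>^n * \<beta>^j)"
      using \<open>summable (\<lambda>i. \<beta>^i)\<close> by (rule summable_mult)
  qed
  also have "\<dots> = \<beta>^n / (1 - \<beta>)"
    using suminf_mult[OF \<open>summable (\<lambda>i. \<beta>^i)\<close>, of "\<beta>^n"] suminf_geometric[of \<beta>] assms(1-3)
    by simp
  finally have R_le: "\<bar>R\<bar> \<le> \<beta>^n / (1 - \<beta>)" by simp
  define G where "G = (\<beta>^n - \<alpha>^n) / (\<beta> - \<alpha>)"
  have "(\<Sum>i<n. f i) = t * (\<Sum>i<n. \<beta>^i * \<alpha>^(n - Suc i))"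
    unfolding f_def sum_distrib_left using D_init by (intro sum.cong) auto
  also have "(\<Sum>i<n. \<beta>^i * \<alpha>^(n - Suc i)) = G"
    using sum_power_mult_power_diff[of \<beta> \<alpha> n] assms(2) unfolding G_def by (simp add: eq_divide_eq)
  finally have init: "(\<Sum>i<n. f i) = t * G" .
  have "\<alpha>^n \<le> \<beta>^n" using assms(1,2) by (intro power_mono) auto
  then have "0 \<le> G" unfolding G_def using assms(2) by auto
  have "G \<le> \<beta>^n / (\<beta> - \<alpha>)" unfolding G_def using assms(1,2) by (intro divide_right_mono) auto
  have "c * G \<le> \<bar>t * G\<bar>" "\<bar>t * G\<bar> \<le> G"
    using t \<open>0 \<le> G\<close> by (auto simp: abs_mult mult_right_mono mult_left_le_one_le)
  moreover have S: "(\<Sum>i. \<beta>^i * D (i + 1)) = R + t * G"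
    using split init unfolding f_def by simp
  ultimately show "\<bar>\<Sum>i. \<beta>^i * D (i + 1)\<bar> \<le> (1 / (\<beta> - \<alpha>) + 1 / (1 - \<beta>)) * \<beta>^n"
    and "c * G - \<beta>^n / (1 - \<beta>) \<le> \<bar>\<Sum>i. \<beta>^i * D (i + 1)\<bar>"
    using R_le \<open>G \<le> \<beta>^n / (\<beta> - \<alpha>)\<close> by (auto simp: distrib_right)
qed

definition backward_series :: "real \<Rightarrow> real \<Rightarrow> real \<Rightarrow> real \<Rightarrow> real" where
  "backward_series \<alpha> \<beta> y y' = (\<Sum>i. \<beta>^i * (y_back \<alpha> (i + 1) y - y_back \<alpha> (i + 1) y'))"

lemma backward_series_level_bounds:
  assumes "0 < \<alpha>" "\<alpha> < \<beta>" "\<beta> < 1/2"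
    and y: "y \<in> cantor_set \<alpha>" and y': "y' \<in> cantor_set \<alpha>" and "y \<noteq> y'"
  obtains n where "(1 - 2 * \<alpha>) * \<alpha>^n \<le> \<bar>y - y'\<bar>" and "\<bar>y - y'\<bar> \<le> \<alpha>^n"
    and "\<bar>backward_series \<alpha> \<beta> y y'\<bar> \<le> (1 / (\<beta> - \<alpha>) + 1 / (1 - \<beta>)) * \<beta>^n"
    and "((1 - 2 * \<alpha>) / (\<beta> - \<alpha>) - 1 / (1 - \<beta>)) * \<beta>^n - (1 - 2 * \<alpha>) / (\<beta> - \<alpha>) * \<alpha>^n
           \<le> \<bar>backward_series \<alpha> \<beta> y y'\<bar>"
proof -
  have a: "0 < \<alpha>" "\<alpha> < 1/2" using assms(1-3) by auto
  obtain n where gap: "1 - 2 * \<alpha> \<le> \<bar>y_back \<alpha> n y - y_back \<alpha> n y'\<bar>"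
    and diff: "y - y' = \<alpha>^n * (y_back \<alpha> n y - y_back \<alpha> n y')"
    and init: "\<And>i. i < n \<Longrightarrow>
      y_back \<alpha> (Suc i) y - y_back \<alpha> (Suc i) y' = \<alpha>^(n - Suc i) * (y_back \<alpha> n y - y_back \<alpha> n y')"
    using cantor_set_first_difference[OF a y y' \<open>y \<noteq> y'\<close>] by blast
  define t where "t = y_back \<alpha> n y - y_back \<alpha> n y'"
  have t_le: "\<bar>t\<bar> \<le> 1" unfolding t_def by (rule y_back_diff_le_one[OF a y y'])
  have abs_diff: "\<bar>y - y'\<bar> = \<alpha>^n * \<bar>t\<bar>"
    using diff a unfolding t_def by (simp add: abs_mult)
  note series_bounds = geometric_weighted_series_bounds[of \<alpha> \<beta> "1 - 2 * \<alpha>"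
      "\<lambda>k. y_back \<alpha> k y - y_back \<alpha> k y'" n t,
      folded backward_series_def, OF assms(1,2) _ _ y_back_diff_le_one[OF a y y'] init[folded t_def]
      gap[folded t_def] t_le]
  show ?thesis
  proof
    show "(1 - 2 * \<alpha>) * \<alpha>^n \<le> \<bar>y - y'\<bar>" "\<bar>y - y'\<bar> \<le> \<alpha>^n"
      unfolding abs_diff using gap t_le a unfolding t_def by (auto simp: mult.commute mult_left_le)
    show "\<bar>backward_series \<alpha> \<beta> y y'\<bar> \<le> (1 / (\<beta> - \<alpha>) + 1 / (1 - \<beta>)) * \<beta>^n"
      using series_bounds(1) assms by simp
    have "(1 - 2 * \<alpha>) * ((\<beta>^n - \<alpha>^n) / (\<beta> - \<alpha>)) - \<beta>^n / (1 - \<beta>)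
        = ((1 - 2 * \<alpha>) / (\<beta> - \<alpha>) - 1 / (1 - \<beta>)) * \<beta>^n - (1 - 2 * \<alpha>) / (\<beta> - \<alpha>) * \<alpha>^n"
      by (simp add: algebra_simps diff_divide_distrib)
    then show "((1 - 2 * \<alpha>) / (\<beta> - \<alpha>) - 1 / (1 - \<beta>)) * \<beta>^n - (1 - 2 * \<alpha>) / (\<beta> - \<alpha>) * \<alpha>^n
        \<le> \<bar>backward_series \<alpha> \<beta> y y'\<bar>"
      using series_bounds(2) assms by simp
  qed
qed

lemma power_powr_ln_ratio:
  fixes \<alpha> \<beta> :: real
  assumes "0 < \<alpha>" "\<alpha> < 1" "0 < \<beta>"
  shows "(\<alpha>^n) powr (ln \<beta> / ln \<alpha>) = \<beta>^n"
proof -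
  have "ln \<alpha> \<noteq> 0" using assms by simp
  then have "ln ((\<alpha>^n) powr (ln \<beta> / ln \<alpha>)) = ln (\<beta>^n)"
    using assms by (simp add: ln_powr ln_realpow)
  moreover have "0 < (\<alpha>^n) powr (ln \<beta> / ln \<alpha>)" "0 < \<beta>^n" using assms by auto
  ultimately show ?thesis by (metis ln_inj_iff)
qed

lemma powr_ln_ratio_between_powers:
  fixes \<alpha> \<beta> c u :: real
  assumes "0 < \<alpha>" "\<alpha> < 1" "0 < \<beta>" "\<beta> < 1" "0 < c"
    and "c * \<alpha>^n \<le> u" "u \<le> \<alpha>^n"
  shows "c powr (ln \<beta> / ln \<alpha>) * \<beta>^n \<le> u powr (ln \<beta> / ln \<alpha>)"
    and "u powr (ln \<beta> / ln \<alpha>) \<le> \<beta>^n"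
proof -
  define \<rho> where "\<rho> = ln \<beta> / ln \<alpha>"
  have "0 < \<rho>" unfolding \<rho>_def using assms(1-4) by (simp add: divide_neg_neg)
  have pow: "(\<alpha>^n) powr \<rho> = \<beta>^n"
    unfolding \<rho>_def using assms(1-3) by (rule power_powr_ln_ratio)
  have "c powr \<rho> * \<beta>^n = (c * \<alpha>^n) powr \<rho>"
    using assms(1,5) pow by (simp add: powr_mult)
  also have "\<dots> \<le> u powr \<rho>"
    using assms(1,5,6) \<open>0 < \<rho>\<close> by (intro powr_mono2) auto
  finally show "c powr (ln \<beta> / ln \<alpha>) * \<beta>^n \<le> u powr (ln \<beta> / ln \<alpha>)" unfolding \<rho>_def .
  have "0 \<le> c * \<alpha>^n" using assms(1,5) by simp
  with assms(6) have "0 \<le> u" by linarith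
  then have "u powr \<rho> \<le> (\<alpha>^n) powr \<rho>"
    using assms(7) \<open>0 < \<rho>\<close> by (intro powr_mono2) auto
  then show "u powr (ln \<beta> / ln \<alpha>) \<le> \<beta>^n" unfolding \<rho>_def pow[unfolded \<rho>_def] .
qed

text \<open>Uses \<open>(1 - 2\<alpha>)(1 - \<beta>) - (\<beta> - \<alpha>) = (1 - 2\<beta>)(1 - \<alpha>)\<close>; this is where \<open>\<beta> < 1/2\<close> is needed.\<close>
lemma gap_coefficient_pos:
  fixes \<alpha> \<beta> :: real
  assumes "0 < \<alpha>" "\<alpha> < \<beta>" "\<beta> < 1/2"
  shows "0 < (1 - 2 * \<alpha>) / (\<beta> - \<alpha>) - 1 / (1 - \<beta>)"
proof -
  have "(1 - 2 * \<alpha>) * (1 - \<beta>) - (\<beta> - \<alpha>) = (1 - 2 * \<beta>) * (1 - \<alpha>)"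
    by (simp add: algebra_simps)
  also have "\<dots> > 0" using assms by auto
  finally have "0 < ((1 - 2 * \<alpha>) * (1 - \<beta>) - (\<beta> - \<alpha>)) / ((\<beta> - \<alpha>) * (1 - \<beta>))"
    using assms by (intro divide_pos_pos) auto
  also have "\<dots> = (1 - 2 * \<alpha>) / (\<beta> - \<alpha>) - 1 / (1 - \<beta>)"
    using assms by (simp add: field_simps)
  finally show ?thesis .
qed

lemma eventually_power_le_mult_power:
  fixes \<alpha> \<beta> \<epsilon> :: real
  assumes "0 < \<alpha>" "\<alpha> < \<beta>" "0 < \<epsilon>"
  obtains N where "\<And>n. N \<le> n \<Longrightarrow> \<alpha>^n \<le> \<epsilon> * \<beta>^n"
proof -
  obtain N where N: "(\<alpha> / \<beta>)^N < \<epsilon>"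
    using real_arch_pow_inv[OF assms(3), of "\<alpha> / \<beta>"] assms(1,2) by auto
  have "\<alpha>^n \<le> \<epsilon> * \<beta>^n" if "N \<le> n" for n
  proof -
    have "(\<alpha> / \<beta>)^n \<le> (\<alpha> / \<beta>)^N"
      using that assms(1,2) by (intro power_decreasing) auto
    with N have "\<alpha>^n / \<beta>^n \<le> \<epsilon>" by (simp add: power_divide)
    with assms(1,2) show ?thesis by (simp add: pos_divide_le_eq)
  qed
  then show ?thesis by (rule that)
qed

lemma backward_series_comparable_to_power:
  fixes \<alpha> \<beta> :: real
  defines "C \<equiv> 1 / (\<beta> - \<alpha>) + 1 / (1 - \<beta>)"
    and "c0 \<equiv> (1 - 2 * \<alpha>) / (\<beta> - \<alpha>) - 1 / (1 - \<beta>)"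
  assumes "0 < \<alpha>" "\<alpha> < \<beta>" "\<beta> < 1/2"
  obtains \<delta> where "0 < \<delta>"
    and "\<And>y y'. y \<in> cantor_set \<alpha> \<Longrightarrow> y' \<in> cantor_set \<alpha> \<Longrightarrow> y \<noteq> y' \<Longrightarrow> \<bar>y - y'\<bar> < \<delta> \<Longrightarrow>
      \<exists>n. (1 - 2 * \<alpha>) * \<alpha>^n \<le> \<bar>y - y'\<bar> \<and> \<bar>y - y'\<bar> \<le> \<alpha>^n \<and>
        \<bar>backward_series \<alpha> \<beta> y y'\<bar> \<le> C * \<beta>^n \<and> c0 / 2 * \<beta>^n \<le> \<bar>backward_series \<alpha> \<beta> y y'\<bar>"
proof -
  define c where "c = (1 - 2 * \<alpha>) / (\<beta> - \<alpha>)"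
  have "0 < c" "0 < c0"
    using assms gap_coefficient_pos[OF assms(3-5)] unfolding c_def c0_def by auto
  obtain N where N: "\<And>n. N \<le> n \<Longrightarrow> \<alpha>^n \<le> c0 / (2 * c) * \<beta>^n"
    using eventually_power_le_mult_power[OF assms(3,4), of "c0 / (2 * c)"] \<open>0 < c\<close> \<open>0 < c0\<close>
    by auto
  define \<delta> where "\<delta> = (1 - 2 * \<alpha>) * \<alpha>^N"
  show ?thesis
  proof
    show "0 < \<delta>" unfolding \<delta>_def using assms by simp
    fix y y' assume y: "y \<in> cantor_set \<alpha>" and y': "y' \<in> cantor_set \<alpha>"
      and "y \<noteq> y'" and close: "\<bar>y - y'\<bar> < \<delta>"
    obtain n where lower: "(1 - 2 * \<alpha>) * \<alpha>^n \<le> \<bar>y - y'\<bar>" and upper: "\<bar>y - y'\<bar> \<le> \<alpha>^n"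
      and bounds: "\<bar>backward_series \<alpha> \<beta> y y'\<bar> \<le> C * \<beta>^n"
        "c0 * \<beta>^n - c * \<alpha>^n \<le> \<bar>backward_series \<alpha> \<beta> y y'\<bar>"
      using backward_series_level_bounds[OF assms(3-5) y y' \<open>y \<noteq> y'\<close>]
      unfolding C_def c0_def c_def .
    have "(1 - 2 * \<alpha>) * \<alpha>^n < (1 - 2 * \<alpha>) * \<alpha>^N"
      using lower close unfolding \<delta>_def by linarith
    then have "N \<le> n"
      using assms by (simp add: mult_less_cancel_left_pos power_strict_decreasing_iff)
    then have "c * \<alpha>^n \<le> c0 / 2 * \<beta>^n"
      using mult_left_mono[OF N, of n c] \<open>0 < c\<close> by simp
    then show "\<exists>n. (1 - 2 * \<alpha>) * \<alpha>^n \<le> \<bar>y - y'\<bar> \<and> \<bar>y - y'\<bar> \<le> \<alpha>^n \<and>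
        \<bar>backward_series \<alpha> \<beta> y y'\<bar> \<le> C * \<beta>^n \<and> c0 / 2 * \<beta>^n \<le> \<bar>backward_series \<alpha> \<beta> y y'\<bar>"
      using lower upper bounds by (intro exI[of _ n]) auto
  qed
qed

lemma powr_bounds_of_power_bounds:
  fixes \<alpha> \<beta> c u I C c' :: real
  assumes "0 < \<alpha>" "\<alpha> < 1" "0 < \<beta>" "\<beta> < 1" "0 < c" "0 \<le> C" "0 \<le> c'"
    and "c * \<alpha>^n \<le> u" "u \<le> \<alpha>^n"
    and "\<bar>I\<bar> \<le> C * \<beta>^n" "c' * \<beta>^n \<le> \<bar>I\<bar>"
  shows "\<bar>I\<bar> \<le> C / c powr (ln \<beta> / ln \<alpha>) * u powr (ln \<beta> / ln \<alpha>)"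
    and "c' * u powr (ln \<beta> / ln \<alpha>) \<le> \<bar>I\<bar>"
proof -
  define \<rho> where "\<rho> = ln \<beta> / ln \<alpha>"
  have powr: "c powr \<rho> * \<beta>^n \<le> u powr \<rho>" "u powr \<rho> \<le> \<beta>^n"
    using powr_ln_ratio_between_powers[OF assms(1-5,8,9)] unfolding \<rho>_def by auto
  have "C * \<beta>^n \<le> C / c powr \<rho> * u powr \<rho>"
    using mult_left_mono[OF powr(1) assms(6)] assms(5) by (simp add: field_simps)
  with assms(10) show "\<bar>I\<bar> \<le> C / c powr (ln \<beta> / ln \<alpha>) * u powr (ln \<beta> / ln \<alpha>)"
    unfolding \<rho>_def by linarith
  have "c' * u powr \<rho> \<le> c' * \<beta>^n"
    using mult_left_mono[OF powr(2) assms(7)] .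
  with assms(11) show "c' * u powr (ln \<beta> / ln \<alpha>) \<le> \<bar>I\<bar>"
    unfolding \<rho>_def by linarith
qed

theorem lemma3p8:
  fixes \<alpha> \<beta> :: real
  assumes "0 < \<alpha>" and "\<alpha> < \<beta>" and "\<beta> < 1/2"
  shows "\<exists>K1 K2 \<delta>. K1 > 0 \<and> K2 > 0 \<and> \<delta> > 0 \<and>
    (\<forall>y \<in> cantor_set \<alpha>. \<forall>y' \<in> cantor_set \<alpha>. \<bar>y - y'\<bar> < \<delta> \<longrightarrow>
      (let \<rho> = ln \<beta> / ln \<alpha>;
           Ip = (\<Sum>i. \<beta> ^ i * (y_back \<alpha> (i + 1) y - y_back \<alpha> (i + 1) y'))
       in K1 * \<bar>y - y'\<bar> powr \<rho> \<ge> \<bar>Ip\<bar> \<and> \<bar>Ip\<bar> \<ge> K2 * \<bar>y - y'\<bar> powr \<rho>))"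
proof -
  define \<rho> where "\<rho> = ln \<beta> / ln \<alpha>"
  define C where "C = 1 / (\<beta> - \<alpha>) + 1 / (1 - \<beta>)"
  define c0 where "c0 = (1 - 2 * \<alpha>) / (\<beta> - \<alpha>) - 1 / (1 - \<beta>)"
  obtain \<delta> where "0 < \<delta>" and comparable: "\<And>y y'. y \<in> cantor_set \<alpha> \<Longrightarrow> y' \<in> cantor_set \<alpha> \<Longrightarrow>
      y \<noteq> y' \<Longrightarrow> \<bar>y - y'\<bar> < \<delta> \<Longrightarrow> \<exists>n. (1 - 2 * \<alpha>) * \<alpha>^n \<le> \<bar>y - y'\<bar> \<and> \<bar>y - y'\<bar> \<le> \<alpha>^n \<and>
        \<bar>backward_series \<alpha> \<beta> y y'\<bar> \<le> C * \<beta>^n \<and> c0 / 2 * \<beta>^n \<le> \<bar>backward_series \<alpha> \<beta> y y'\<bar>"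
    using backward_series_comparable_to_power[OF assms] unfolding C_def c0_def by blast
  have "0 < \<rho>" "0 < (1 - 2 * \<alpha>) powr \<rho>" "0 < C" "0 < c0"
    using assms gap_coefficient_pos[OF assms]
    unfolding \<rho>_def C_def c0_def by (auto simp: divide_neg_neg intro!: add_pos_pos)
  define K1 where "K1 = C / (1 - 2 * \<alpha>) powr \<rho>"
  have "\<bar>backward_series \<alpha> \<beta> y y'\<bar> \<le> K1 * \<bar>y - y'\<bar> powr \<rho> \<and>
      c0 / 2 * \<bar>y - y'\<bar> powr \<rho> \<le> \<bar>backward_series \<alpha> \<beta> y y'\<bar>"
    if pair: "y \<in> cantor_set \<alpha>" "y' \<in> cantor_set \<alpha>" "\<bar>y - y'\<bar> < \<delta>" for y y'
  proof (cases "y = y'")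
    case False
    then obtain n where "(1 - 2 * \<alpha>) * \<alpha>^n \<le> \<bar>y - y'\<bar>" "\<bar>y - y'\<bar> \<le> \<alpha>^n"
      "\<bar>backward_series \<alpha> \<beta> y y'\<bar> \<le> C * \<beta>^n" "c0 / 2 * \<beta>^n \<le> \<bar>backward_series \<alpha> \<beta> y y'\<bar>"
      using comparable pair by blast
    with powr_bounds_of_power_bounds[of \<alpha> \<beta> "1 - 2 * \<alpha>" C "c0 / 2", folded \<rho>_def]
    show ?thesis using assms \<open>0 < C\<close> \<open>0 < c0\<close> unfolding K1_def by auto
  qed (simp add: backward_series_def \<open>0 < \<rho>\<close>)
  moreover have "0 < K1" unfolding K1_def using \<open>0 < C\<close> \<open>0 < (1 - 2 * \<alpha>) powr \<rho>\<close> by simp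
  ultimately show ?thesis
    using \<open>0 < c0\<close> \<open>0 < \<delta>\<close> unfolding Let_def backward_series_def[symmetric] \<rho>_def[symmetric]
    by (metis half_gt_zero)
qed

end
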